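(* Let $\mathbf f$ be a face degree sequence, $g\ge0$, and $p\ge j_0\ge1$. Then \[|\mathbf f|\,\beta_g(\mathbf f-\mathbf 1_{j_0})\ge j_0f_{j_0}\,\beta_g(\mathbf f-\mathbf 1_p).\] In particular, if $j_0f_{j_0}\ge\delta|\mathbf f|$ for some $\delta>0$, then $\beta_g(\mathbf f-\mathbf 1_{j_0})\ge\delta\,\beta_g(\mathbf f-\mathbf 1_p)$.
   Context: A face degree sequence is $\mathbf f=(f_j)_{j\ge1}$ of nonnegative integers, eventually zero; $|\mathbf f|=\sum_jjf_j$; $\mathbf 1_j$ is the indicator sequence of $j$. $\beta_g(\mathbf f)$ is the number of rooted bipartite maps of genus $g$ with $f_j$ faces of degree $2j$ for all $j$ (zero if some entry of $\mathbf f$ is negative). *)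

theory Defs
  imports Complex_Main "HOL-Combinatorics.Permutations"
begin

text \<open>A face degree sequence is represented as a function f :: nat \<Rightarrow> nat with finite
support and f 0 = 0 (only indices j \<ge> 1 are meaningful).  Sequences that may have
negative entries (such as f - 1_j) are represented as nat \<Rightarrow> int.\<close>

definition face_deg_seq :: "(nat \<Rightarrow> nat) \<Rightarrow> bool" where
  "face_deg_seq f \<longleftrightarrow> f 0 = 0 \<and> finite {j. f j \<noteq> 0}"

definition fsize :: "(nat \<Rightarrow> int) \<Rightarrow> int" where
  "fsize f = (\<Sum>j\<in>{j. f j \<noteq> 0}. int j * f j)"

definition ind_seq :: "nat \<Rightarrow> nat \<Rightarrow> int" where
  "ind_seq j = (\<lambda>i. if i = j then 1 else 0)"

text \<open>Bipartite maps with n edges labelled 0..n-1 are encoded as pairs of permutations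
(sigma, alpha) of {..<n}: sigma gives the cyclic order of edges around black vertices,
alpha around white vertices; faces are the cycles of sigma o alpha, a cycle of length j
corresponding to a face of degree 2j.  Connectivity is transitivity of the generated group.\<close>

definition perm_orbit :: "(nat \<Rightarrow> nat) \<Rightarrow> nat \<Rightarrow> nat set" where
  "perm_orbit \<pi> x = {(\<pi> ^^ k) x | k. True}"

definition perm_cycles :: "(nat \<Rightarrow> nat) \<Rightarrow> nat \<Rightarrow> nat set set" where
  "perm_cycles \<pi> n = perm_orbit \<pi> ` {..<n}"

definition transitive_pair :: "(nat \<Rightarrow> nat) \<Rightarrow> (nat \<Rightarrow> nat) \<Rightarrow> nat \<Rightarrow> bool" where
  "transitive_pair \<sigma> \<alpha> n \<longleftrightarrow>
     (\<forall>x<n. \<forall>y<n. (x, y) \<in> ({(u, \<sigma> u) | u. True} \<union> {(u, \<alpha> u) | u. True})\<^sup>*)"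

definition labelled_bip_maps :: "nat \<Rightarrow> (nat \<Rightarrow> nat) \<Rightarrow> nat \<Rightarrow> ((nat \<Rightarrow> nat) \<times> (nat \<Rightarrow> nat)) set" where
  "labelled_bip_maps g f n = {(\<sigma>, \<alpha>).
      \<sigma> permutes {..<n} \<and> \<alpha> permutes {..<n} \<and> transitive_pair \<sigma> \<alpha> n \<and>
      (\<forall>j\<ge>1. card {c \<in> perm_cycles (\<sigma> \<circ> \<alpha>) n. card c = j} = f j) \<and>
      int (card (perm_cycles \<sigma> n)) + int (card (perm_cycles \<alpha> n)) - int n
        + int (card (perm_cycles (\<sigma> \<circ> \<alpha>) n)) = 2 - 2 * int g}"

text \<open>Number of rooted bipartite maps of genus g with f_j faces of degree 2j:
each rooted map with n edges corresponds to exactly (n-1)! labelled pairs.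
Zero if some entry is negative.\<close>

definition beta :: "nat \<Rightarrow> (nat \<Rightarrow> int) \<Rightarrow> nat" where
  "beta g f = (if (\<exists>j. f j < 0) then 0 else
     (let n = nat (fsize f) in
       card (labelled_bip_maps g (\<lambda>j. nat (f j)) n) div fact (n - 1)))"

end

theory Submission
  imports Defs "HOL-Combinatorics.Orbits"
begin

text \<open>
  Let \<open>N = |f|\<close>, \<open>m = N - p\<close>, \<open>n = N - j0\<close>, and let \<open>A\<close>, \<open>B\<close> be the sets of labelled maps
  (pairs \<open>(\<sigma>, \<alpha>)\<close> of permutations of the edges) of genus \<open>g\<close> with face counts \<open>f - 1\<^sub>p\<close> on
  \<open>m\<close> edges and \<open>f - 1\<^sub>j\<^sub>0\<close> on \<open>n\<close> edges. Relabellings fixing the root edge act freely on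
  connected maps, so \<open>(m - 1)!\<close> divides \<open>|A|\<close>, \<open>(n - 1)!\<close> divides \<open>|B|\<close>, and the quotients
  are the rooted counts \<open>\<beta>\<^sub>g\<close>.

  Given a map in \<open>A\<close> and one of the \<open>j0 f\<^sub>j\<^sub>0\<close> edges on a face of degree \<open>2 j0\<close>, attach
  \<open>p - j0\<close> new leaves inside that face: it becomes a face of degree \<open>2 p\<close>, the genus is
  unchanged, and the result lies in \<open>B\<close>. Composed with all \<open>n!\<close> relabellings, the result
  together with the label of the last new leaf determines the input up to the \<open>m!\<close>
  permutations of the old edges. Hence \<open>j0 f\<^sub>j\<^sub>0 n! |A| \<le> m! n |B|\<close>, that is
  \<open>j0 f\<^sub>j\<^sub>0 \<beta>\<^sub>g(f - 1\<^sub>p) \<le> m \<beta>\<^sub>g(f - 1\<^sub>j\<^sub>0) \<le> N \<beta>\<^sub>g(f - 1\<^sub>j\<^sub>0)\<close>.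
\<close>

section \<open>Orbits and cycles\<close>

lemma perm_orbit_self: "x \<in> perm_orbit \<pi> x"
  unfolding perm_orbit_def by (auto intro: exI[of _ 0])

lemma funpow_in_perm_orbit: "(\<pi> ^^ k) x \<in> perm_orbit \<pi> x"
  unfolding perm_orbit_def by blast

lemma perm_orbit_closed:
  assumes "y \<in> perm_orbit \<pi> x"
  shows "\<pi> y \<in> perm_orbit \<pi> x"
proof -
  obtain k where "y = (\<pi> ^^ k) x"
    using assms unfolding perm_orbit_def by auto
  then have "\<pi> y = (\<pi> ^^ Suc k) x"
    by simp
  then show ?thesis
    by (simp only: funpow_in_perm_orbit)
qed

lemma perm_orbit_minimal:
  assumes "x \<in> T" and "\<And>y. y \<in> T \<Longrightarrow> \<pi> y \<in> T"
  shows "perm_orbit \<pi> x \<subseteq> T"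
proof -
  have "(\<pi> ^^ k) x \<in> T" for k
    by (induction k) (use assms in auto)
  then show ?thesis
    unfolding perm_orbit_def by blast
qed

lemma perm_orbit_eq_orbit: "permutation \<pi> \<Longrightarrow> perm_orbit \<pi> x = orbit \<pi> x"
  by (simp add: perm_orbit_def orbit_altdef_permutation)

lemma perm_orbit_eq:
  assumes "permutation \<pi>" and "y \<in> perm_orbit \<pi> x"
  shows "perm_orbit \<pi> y = perm_orbit \<pi> x"
  using assms by (simp add: perm_orbit_eq_orbit) (metis cyclic_on_orbit' orbit_cyclic_eq3)

lemma perm_orbit_disjoint:
  "permutation \<pi> \<Longrightarrow> perm_orbit \<pi> x \<noteq> perm_orbit \<pi> y \<Longrightarrow> perm_orbit \<pi> x \<inter> perm_orbit \<pi> y = {}"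
  by (metis disjoint_iff perm_orbit_eq)

lemma perm_orbit_fixpoint: "\<pi> x = x \<Longrightarrow> perm_orbit \<pi> x = {x}"
  using perm_orbit_minimal[of x "{x}" \<pi>] perm_orbit_self[of x \<pi>] by auto

lemma perm_orbit_subset: "\<pi> permutes S \<Longrightarrow> x \<in> S \<Longrightarrow> perm_orbit \<pi> x \<subseteq> S"
  by (rule perm_orbit_minimal) (auto simp: permutes_in_image)

lemma perm_orbit_rtrancl:
  assumes "y \<in> perm_orbit \<pi> x"
  shows "(x, y) \<in> ({(u, \<pi> u) | u. True} \<union> R)\<^sup>*"
proof -
  have "(x, (\<pi> ^^ k) x) \<in> ({(u, \<pi> u) | u. True} \<union> R)\<^sup>*" for k
  proof (induction k)
    case (Suc k)
    have "((\<pi> ^^ k) x, \<pi> ((\<pi> ^^ k) x)) \<in> {(u, \<pi> u) | u. True} \<union> R"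
      by blast
    with Suc show ?case
      by (simp add: rtrancl_into_rtrancl)
  qed simp
  then show ?thesis
    using assms unfolding perm_orbit_def by blast
qed

lemma finite_perm_cycles [simp]: "finite (perm_cycles \<pi> n)"
  by (simp add: perm_cycles_def)

lemma card_perm_cycles_extend:
  assumes \<alpha>: "\<alpha> permutes {..<m}" and "m \<le> n"
  shows "card (perm_cycles \<alpha> n) = card (perm_cycles \<alpha> m) + (n - m)"
proof -
  have "perm_orbit \<alpha> x = {x}" if "m \<le> x" for x
    using perm_orbit_fixpoint permutes_not_in[OF \<alpha>] that by simp
  moreover have "{..<n} = {..<m} \<union> {m..<n}"
    using \<open>m \<le> n\<close> by auto
  ultimately have split: "perm_cycles \<alpha> n = perm_cycles \<alpha> m \<union> (\<lambda>x. {x}) ` {m..<n}"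
    unfolding perm_cycles_def by (auto simp: image_Un)
  have "c \<subseteq> {..<m}" if "c \<in> perm_cycles \<alpha> m" for c
    using that perm_orbit_subset[OF \<alpha>] unfolding perm_cycles_def by auto
  then have "perm_cycles \<alpha> m \<inter> (\<lambda>x. {x}) ` {m..<n} = {}"
    by fastforce
  moreover have "card ((\<lambda>x. {x}) ` {m..<n}) = n - m"
    by (subst card_image) (auto simp: inj_on_def)
  ultimately show ?thesis
    unfolding split by (simp add: card_Un_disjoint)
qed

lemma card_points_on_cycles_of_size:
  assumes "\<pi> permutes {..<m}"
  shows "card {u. u < m \<and> card (perm_orbit \<pi> u) = j} = j * card {c \<in> perm_cycles \<pi> m. card c = j}"
proof -
  have perm: "permutation \<pi>"
    using assms permutes_imp_permutation by blast
  define C where "C = {c \<in> perm_cycles \<pi> m. card c = j}"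
  have "\<Union>C = {u. u < m \<and> card (perm_orbit \<pi> u) = j}"
  proof (intro set_eqI iffI)
    fix u assume "u \<in> \<Union>C"
    then obtain x where "x < m" "u \<in> perm_orbit \<pi> x" "card (perm_orbit \<pi> x) = j"
      unfolding C_def perm_cycles_def by auto
    then show "u \<in> {u. u < m \<and> card (perm_orbit \<pi> u) = j}"
      using perm_orbit_eq[OF perm] perm_orbit_subset[OF assms] by fastforce
  next
    fix u assume "u \<in> {u. u < m \<and> card (perm_orbit \<pi> u) = j}"
    then show "u \<in> \<Union>C"
      unfolding C_def perm_cycles_def using perm_orbit_self by fastforce
  qed
  moreover have "j * card C = card (\<Union>C)"
  proof (rule card_partition)
    show "finite C" "finite (\<Union>C)"
      using \<open>\<Union>C = _\<close> by (auto simp: C_def)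
    show "\<And>c. c \<in> C \<Longrightarrow> card c = j"
      by (simp add: C_def)
    show "\<And>c1 c2. c1 \<in> C \<Longrightarrow> c2 \<in> C \<Longrightarrow> c1 \<noteq> c2 \<Longrightarrow> c1 \<inter> c2 = {}"
      unfolding C_def perm_cycles_def using perm_orbit_disjoint[OF perm] by blast
  qed
  ultimately show ?thesis
    by (simp add: C_def)
qed

lemma card_filter_exchange:
  assumes "finite C" "X \<in> C" "Y \<notin> C"
  shows "card {c \<in> insert Y (C - {X}). P c} + of_bool (P X) = card {c \<in> C. P c} + of_bool (P Y)"
proof -
  define S where "S = {c \<in> C. P c}"
  have S: "finite S" "Y \<notin> S - {X}"
    using assms by (auto simp: S_def)
  have "card (S - {X}) + of_bool (P X) = card S"
  proof (cases "P X")
    case True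
    then have "X \<in> S"
      using assms by (simp add: S_def)
    then have "card S > 0"
      using S card_gt_0_iff by blast
    then show ?thesis
      using True \<open>X \<in> S\<close> S by (simp add: card_Diff_singleton)
  qed (simp add: S_def)
  moreover have "{c \<in> insert Y (C - {X}). P c} = (if P Y then insert Y (S - {X}) else S - {X})"
    by (auto simp: S_def)
  ultimately show ?thesis
    using S by (simp add: S_def)
qed

lemma card_exchange:
  assumes "finite C" "X \<in> C" "Y \<notin> C"
  shows "card (insert Y (C - {X})) = card C"
proof -
  have "card C > 0"
    using assms card_gt_0_iff by blast
  then show ?thesis
    using assms by (simp add: card_insert_disjoint card_Diff_singleton)
qed

section \<open>Inserting a chain of new points into a cycle\<close>

definition insert_chain :: "(nat \<Rightarrow> nat) \<Rightarrow> nat \<Rightarrow> nat \<Rightarrow> nat \<Rightarrow> nat \<Rightarrow> nat" where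
  "insert_chain \<pi> a m n x =
     (if x = a then m else if m \<le> x \<and> x < n - 1 then Suc x else if x = n - 1 then \<pi> a else \<pi> x)"

lemma insert_chain_middle: "a < m \<Longrightarrow> m \<le> x \<Longrightarrow> x < n - 1 \<Longrightarrow> insert_chain \<pi> a m n x = Suc x"
  by (simp add: insert_chain_def)

locale chain_insertion =
  fixes \<pi> :: "nat \<Rightarrow> nat" and a m n :: nat
  assumes permutes: "\<pi> permutes {..<m}" and a_less: "a < m" and m_less: "m < n"
begin

lemma less_imp_apply_less: "x < m \<Longrightarrow> \<pi> x < m"
  using permutes permutes_in_image by fastforce

lemma apply_eq_self: "m \<le> x \<Longrightarrow> \<pi> x = x"
  using permutes permutes_not_in by fastforce

lemma apply_inject: "\<pi> x = \<pi> y \<Longrightarrow> x = y"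
  using permutes permutes_inj injD by metis

lemma insert_chain_start: "insert_chain \<pi> a m n a = m"
  by (simp add: insert_chain_def)

lemma insert_chain_last: "insert_chain \<pi> a m n (n - 1) = \<pi> a"
proof -
  have "n - 1 \<noteq> a"
    using a_less m_less by linarith
  then show ?thesis
    by (simp add: insert_chain_def)
qed

lemma insert_chain_old:
  assumes "x < m" "x \<noteq> a"
  shows "insert_chain \<pi> a m n x = \<pi> x"
proof -
  have "x \<noteq> n - 1"
    using assms m_less by linarith
  then show ?thesis
    using assms by (simp add: insert_chain_def)
qed

lemma insert_chain_cases:
  assumes "x < n"
  obtains "x = a" | "x \<noteq> a" "m \<le> x" "x < n - 1" | "x = n - 1" | "x \<noteq> a" "x < m"
  using assms by linarith

lemma insert_chain_permutes: "insert_chain \<pi> a m n permutes {..<n}"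
proof (rule bij_imp_permutes)
  let ?f = "insert_chain \<pi> a m n"
  define g where "g z = (if z = m then a else if m < z \<and> z < n then z - 1
      else if z = \<pi> a then n - 1 else inv \<pi> z)" for z
  have "?f x < n \<and> g (?f x) = x" if "x < n" for x
    using that
  proof (cases rule: insert_chain_cases)
    case 1
    then show ?thesis
      using insert_chain_start m_less by (simp add: g_def)
  next
    case 2
    then show ?thesis
      using insert_chain_middle[OF a_less] by (simp add: g_def)
  next
    case 3
    then show ?thesis
      using insert_chain_last less_imp_apply_less[OF a_less] m_less by (simp add: g_def)
  next
    case 4
    then show ?thesis
      using insert_chain_old less_imp_apply_less[of x] apply_inject[of x a] m_less
        permutes_inverses(2)[OF permutes] by (auto simp: g_def)
  qed
  then have "?f ` {..<n} \<subseteq> {..<n}" and "inj_on ?f {..<n}"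
    by (auto intro: inj_on_inverseI)
  then show "bij_betw ?f {..<n} {..<n}"
    unfolding bij_betw_def using endo_inj_surj[OF finite_lessThan] by blast
  show "?f x = x" if "x \<notin> {..<n}" for x
  proof -
    have "x \<noteq> a" "x \<noteq> n - 1" "m \<le> x" "\<not> x < n - 1"
      using that a_less m_less by auto
    then show ?thesis
      using apply_eq_self by (simp add: insert_chain_def)
  qed
qed

lemma insert_chain_permutation: "permutation (insert_chain \<pi> a m n)"
  using insert_chain_permutes permutes_imp_permutation by blast

lemma perm_orbit_subset_old: "perm_orbit \<pi> a \<subseteq> {..<m}"
  using perm_orbit_subset[OF permutes] a_less by auto

lemma perm_orbit_insert_chain_other:
  assumes "x \<notin> perm_orbit \<pi> a" "x \<notin> {m..<n}"
  shows "perm_orbit (insert_chain \<pi> a m n) x = perm_orbit \<pi> x"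
proof -
  have "(insert_chain \<pi> a m n ^^ k) x = (\<pi> ^^ k) x" for k
  proof (induction k)
    case (Suc k)
    let ?y = "(\<pi> ^^ k) x"
    have y: "?y \<in> perm_orbit \<pi> x"
      by (rule funpow_in_perm_orbit)
    have "?y \<noteq> a"
      using assms(1) perm_orbit_eq[OF permutes_imp_permutation[OF _ permutes] y] perm_orbit_self[of x]
      by auto
    moreover have "?y \<notin> {m..<n}"
    proof (cases "x < m")
      case True
      then show ?thesis
        using perm_orbit_subset[OF permutes, of x] y by auto
    next
      case False
      then have "perm_orbit \<pi> x = {x}"
        using apply_eq_self perm_orbit_fixpoint by simp
      then show ?thesis
        using y assms(2) by simp
    qed
    ultimately show ?case
      using Suc m_less by (auto simp: insert_chain_def)
  qed simp
  then show ?thesis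
    unfolding perm_orbit_def by simp
qed

lemma funpow_insert_chain_start: "k < n - m \<Longrightarrow> (insert_chain \<pi> a m n ^^ Suc k) a = m + k"
proof (induction k)
  case (Suc k)
  let ?f = "insert_chain \<pi> a m n"
  have prev: "(?f ^^ Suc k) a = m + k" and "m + k < n - 1"
    using Suc by auto
  have "(?f ^^ Suc (Suc k)) a = ?f ((?f ^^ Suc k) a)"
    by (simp only: funpow.simps o_apply)
  also have "\<dots> = m + Suc k"
    unfolding prev using insert_chain_middle[OF a_less _ \<open>m + k < n - 1\<close>] by simp
  finally show ?case .
qed (simp add: insert_chain_def)

lemma insert_chain_maps_grown_orbit:
  assumes y: "y \<in> perm_orbit \<pi> a \<union> {m..<n}"
  shows "insert_chain \<pi> a m n y \<in> perm_orbit \<pi> a \<union> {m..<n}"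
proof (cases "y \<in> {m..<n}")
  case True
  then show ?thesis
    using a_less m_less perm_orbit_closed[OF perm_orbit_self, of \<pi> a]
    by (cases "y < n - 1") (auto simp: insert_chain_def)
next
  case False
  then have "y \<in> perm_orbit \<pi> a" "y < m"
    using y perm_orbit_subset_old by auto
  then show ?thesis
    using m_less perm_orbit_closed[of y \<pi> a] by (cases "y = a") (auto simp: insert_chain_def)
qed

lemma chain_subset_perm_orbit_insert_chain: "{m..<n} \<subseteq> perm_orbit (insert_chain \<pi> a m n) a"
proof
  fix x assume "x \<in> {m..<n}"
  then have "(insert_chain \<pi> a m n ^^ Suc (x - m)) a = x"
    using funpow_insert_chain_start[of "x - m"] by auto
  then show "x \<in> perm_orbit (insert_chain \<pi> a m n) a"
    using funpow_in_perm_orbit[of "Suc (x - m)" "insert_chain \<pi> a m n" a] by simp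
qed

lemma perm_orbit_subset_perm_orbit_insert_chain:
  "perm_orbit \<pi> a \<subseteq> perm_orbit (insert_chain \<pi> a m n) a"
proof -
  let ?f = "insert_chain \<pi> a m n"
  have "(\<pi> ^^ k) a \<in> perm_orbit ?f a" for k
  proof (induction k)
    case (Suc k)
    show ?case
    proof (cases "(\<pi> ^^ k) a = a")
      case True
      have "n - 1 \<in> perm_orbit ?f a"
        using chain_subset_perm_orbit_insert_chain m_less by auto
      then have "?f (n - 1) \<in> perm_orbit ?f a"
        by (rule perm_orbit_closed)
      then show ?thesis
        using True insert_chain_last by simp
    next
      case False
      have "(\<pi> ^^ k) a < m"
        using funpow_in_perm_orbit perm_orbit_subset_old by blast
      then have "?f ((\<pi> ^^ k) a) = (\<pi> ^^ Suc k) a"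
        using False insert_chain_old by simp
      then show ?thesis
        using perm_orbit_closed[OF Suc] by simp
    qed
  qed (simp add: perm_orbit_self)
  then show ?thesis
    unfolding perm_orbit_def by blast
qed

lemma perm_orbit_insert_chain: "perm_orbit (insert_chain \<pi> a m n) a = perm_orbit \<pi> a \<union> {m..<n}"
proof
  show "perm_orbit (insert_chain \<pi> a m n) a \<subseteq> perm_orbit \<pi> a \<union> {m..<n}"
    using insert_chain_maps_grown_orbit by (intro perm_orbit_minimal) (auto simp: perm_orbit_self)
  show "perm_orbit \<pi> a \<union> {m..<n} \<subseteq> perm_orbit (insert_chain \<pi> a m n) a"
    using chain_subset_perm_orbit_insert_chain perm_orbit_subset_perm_orbit_insert_chain by simp
qed

lemma perm_orbit_insert_chain_grown:
  "y \<in> perm_orbit \<pi> a \<union> {m..<n} \<Longrightarrow> perm_orbit (insert_chain \<pi> a m n) y = perm_orbit \<pi> a \<union> {m..<n}"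
  using perm_orbit_eq[OF insert_chain_permutation, of y a] perm_orbit_insert_chain by simp

lemma perm_cycles_insert_chain:
  "perm_cycles (insert_chain \<pi> a m n) n
     = insert (perm_orbit \<pi> a \<union> {m..<n}) (perm_cycles \<pi> m - {perm_orbit \<pi> a})"
  (is "?lhs = insert ?O' (?C - {?O})")
proof (intro set_eqI iffI)
  let ?f = "insert_chain \<pi> a m n"
  fix c
  assume "c \<in> ?lhs"
  then obtain x where x: "x < n" "c = perm_orbit ?f x"
    by (auto simp: perm_cycles_def)
  show "c \<in> insert ?O' (?C - {?O})"
  proof (cases "x \<in> ?O'")
    case True
    then show ?thesis
      using perm_orbit_insert_chain_grown x by simp
  next
    case False
    then have "x < m" "perm_orbit \<pi> x \<noteq> ?O"
      using x perm_orbit_self[of x \<pi>] by auto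
    then show ?thesis
      using perm_orbit_insert_chain_other False x by (auto simp: perm_cycles_def)
  qed
next
  let ?f = "insert_chain \<pi> a m n"
  fix c
  assume c: "c \<in> insert ?O' (?C - {?O})"
  show "c \<in> ?lhs"
  proof (cases "c = ?O'")
    case True
    then show ?thesis
      using perm_orbit_insert_chain a_less m_less by (auto simp: perm_cycles_def)
  next
    case False
    then obtain x where x: "x < m" "c = perm_orbit \<pi> x" "c \<noteq> ?O"
      using c by (auto simp: perm_cycles_def)
    then have "x \<notin> ?O"
      using perm_orbit_eq[OF permutes_imp_permutation[OF _ permutes], of x a] by auto
    then have "c = perm_orbit ?f x"
      using perm_orbit_insert_chain_other x by simp
    then show ?thesis
      using x m_less unfolding perm_cycles_def by (intro image_eqI[of _ _ x]) auto
  qed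
qed

lemma perm_orbit_in_perm_cycles: "perm_orbit \<pi> a \<in> perm_cycles \<pi> m"
  using a_less by (auto simp: perm_cycles_def)

lemma grown_orbit_notin_perm_cycles: "perm_orbit \<pi> a \<union> {m..<n} \<notin> perm_cycles \<pi> m"
proof
  assume "perm_orbit \<pi> a \<union> {m..<n} \<in> perm_cycles \<pi> m"
  then have "perm_orbit \<pi> a \<union> {m..<n} \<subseteq> {..<m}"
    using perm_orbit_subset[OF permutes] by (auto simp: perm_cycles_def)
  then show False
    using m_less by auto
qed

lemma card_grown_orbit: "card (perm_orbit \<pi> a \<union> {m..<n}) = card (perm_orbit \<pi> a) + (n - m)"
  using perm_orbit_subset_old finite_subset
  by (subst card_Un_disjoint) fastforce+

lemma card_perm_cycles_insert_chain:
  "card (perm_cycles (insert_chain \<pi> a m n) n) = card (perm_cycles \<pi> m)"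
  unfolding perm_cycles_insert_chain
  by (rule card_exchange[OF finite_perm_cycles perm_orbit_in_perm_cycles grown_orbit_notin_perm_cycles])

lemma card_cycles_of_size_insert_chain:
  "card {c \<in> perm_cycles (insert_chain \<pi> a m n) n. card c = j} + of_bool (card (perm_orbit \<pi> a) = j)
     = card {c \<in> perm_cycles \<pi> m. card c = j} + of_bool (card (perm_orbit \<pi> a) + (n - m) = j)"
  unfolding perm_cycles_insert_chain card_grown_orbit[symmetric]
  by (rule card_filter_exchange[OF finite_perm_cycles perm_orbit_in_perm_cycles grown_orbit_notin_perm_cycles])

lemma apply_in_rtrancl_insert_chain: "(u, \<pi> u) \<in> ({(v, insert_chain \<pi> a m n v) | v. True} \<union> R)\<^sup>*"
proof -
  consider "u = a" | "u \<noteq> a" "u < m" | "m \<le> u"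
    by linarith
  then show ?thesis
  proof cases
    case 1
    have "\<pi> a \<in> perm_orbit (insert_chain \<pi> a m n) a"
      using perm_orbit_insert_chain perm_orbit_closed[OF perm_orbit_self] by auto
    then show ?thesis
      using 1 perm_orbit_rtrancl by blast
  next
    case 2
    then show ?thesis
      using insert_chain_old by (intro r_into_rtrancl) force
  qed (simp add: apply_eq_self)
qed

lemma transitive_pair_insert_chain:
  assumes "transitive_pair \<pi> \<alpha> m"
  shows "transitive_pair (insert_chain \<pi> a m n) \<alpha> n"
proof -
  let ?f = "insert_chain \<pi> a m n"
  define R where "R = {(u, \<pi> u) | u. True} \<union> {(u, \<alpha> u) | u. True}"
  define R' where "R' = {(u, ?f u) | u. True} \<union> {(u, \<alpha> u) | u. True}"
  have "R \<subseteq> R'\<^sup>*"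
    unfolding R_def R'_def using apply_in_rtrancl_insert_chain by auto
  then have "R\<^sup>* \<subseteq> R'\<^sup>*"
    by (rule rtrancl_subset_rtrancl)
  have to_a: "(x, a) \<in> R'\<^sup>* \<and> (a, x) \<in> R'\<^sup>*" if "x < n" for x
  proof (cases "x < m")
    case True
    then have "(x, a) \<in> R\<^sup>*" "(a, x) \<in> R\<^sup>*"
      using assms a_less unfolding transitive_pair_def R_def by blast+
    then show ?thesis
      using \<open>R\<^sup>* \<subseteq> R'\<^sup>*\<close> by blast
  next
    case False
    then have "x \<in> perm_orbit ?f a" "a \<in> perm_orbit ?f x"
      using that perm_orbit_insert_chain perm_orbit_insert_chain_grown[of x] perm_orbit_self[of a ?f]
      by auto
    then show ?thesis
      using perm_orbit_rtrancl unfolding R'_def by blast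
  qed
  show ?thesis
    unfolding transitive_pair_def R'_def[symmetric]
    using to_a rtrancl_trans by metis
qed

end

lemma insert_chain_inj:
  assumes "chain_insertion \<pi> a m n" "chain_insertion \<pi>' a' m n"
    and eq: "insert_chain \<pi> a m n = insert_chain \<pi>' a' m n"
  shows "\<pi> = \<pi>' \<and> a = a'"
proof -
  interpret I: chain_insertion \<pi> a m n by fact
  interpret I': chain_insertion \<pi>' a' m n by fact
  have "a = a'"
  proof (rule ccontr)
    assume "a \<noteq> a'"
    then have "insert_chain \<pi>' a' m n a < m"
      using I'.insert_chain_old I'.less_imp_apply_less I.a_less by simp
    then show False
      using eq I.insert_chain_start by simp
  qed
  moreover have "\<pi> x = \<pi>' x" for x
  proof -
    consider "x = a" | "x < m" "x \<noteq> a" | "m \<le> x"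
      by linarith
    then show ?thesis
    proof cases
      case 1
      then show ?thesis
        using I.insert_chain_last I'.insert_chain_last eq \<open>a = a'\<close> by metis
    next
      case 2
      then show ?thesis
        using I.insert_chain_old I'.insert_chain_old eq \<open>a = a'\<close> by metis
    qed (simp add: I.apply_eq_self I'.apply_eq_self)
  qed
  ultimately show ?thesis
    by auto
qed

lemma insert_chain_comp:
  assumes \<sigma>: "\<sigma> permutes {..<m}" and \<alpha>: "\<alpha> permutes {..<m}" and "u < m" "m < n"
  shows "insert_chain \<sigma> (\<alpha> u) m n \<circ> \<alpha> = insert_chain (\<sigma> \<circ> \<alpha>) u m n"
proof
  fix x
  show "(insert_chain \<sigma> (\<alpha> u) m n \<circ> \<alpha>) x = insert_chain (\<sigma> \<circ> \<alpha>) u m n x"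
  proof (cases "x < m")
    case True
    then have "\<alpha> x < m"
      using \<alpha> permutes_in_image by fastforce
    moreover have "\<alpha> x = \<alpha> u \<longleftrightarrow> x = u"
      using permutes_inj[OF \<alpha>] by (simp add: inj_eq)
    moreover have "x \<noteq> n - 1" "\<alpha> x \<noteq> n - 1"
      using True \<open>\<alpha> x < m\<close> \<open>m < n\<close> by linarith+
    ultimately show ?thesis
      using True by (simp add: insert_chain_def)
  next
    case False
    then have "\<alpha> x = x" "\<sigma> x = x" "x \<noteq> u" "x \<noteq> \<alpha> u"
      using \<sigma> \<alpha> \<open>u < m\<close> permutes_not_in permutes_in_image[OF \<alpha>, of u] by fastforce+
    then show ?thesis
      by (simp add: insert_chain_def)
  qed
qed

section \<open>Relabelling edges\<close>

definition perm_conj :: "(nat \<Rightarrow> nat) \<Rightarrow> (nat \<Rightarrow> nat) \<Rightarrow> nat \<Rightarrow> nat" where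
  "perm_conj \<tau> \<sigma> = \<tau> \<circ> \<sigma> \<circ> inv \<tau>"

definition relabel ::
  "(nat \<Rightarrow> nat) \<Rightarrow> (nat \<Rightarrow> nat) \<times> (nat \<Rightarrow> nat) \<Rightarrow> (nat \<Rightarrow> nat) \<times> (nat \<Rightarrow> nat)" where
  "relabel \<tau> M = (perm_conj \<tau> (fst M), perm_conj \<tau> (snd M))"

lemma perm_conj_apply: "\<tau> permutes S \<Longrightarrow> perm_conj \<tau> \<sigma> (\<tau> x) = \<tau> (\<sigma> x)"
  by (simp add: perm_conj_def permutes_inverses(2))

lemma permutes_perm_conj: "\<tau> permutes S \<Longrightarrow> \<sigma> permutes S \<Longrightarrow> perm_conj \<tau> \<sigma> permutes S"
  unfolding perm_conj_def by (intro permutes_compose permutes_inv)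

lemma perm_conj_comp: "\<tau> permutes S \<Longrightarrow> perm_conj \<tau> \<sigma> \<circ> perm_conj \<tau> \<alpha> = perm_conj \<tau> (\<sigma> \<circ> \<alpha>)"
  unfolding perm_conj_def using permutes_inv_o(2)[of \<tau> S] by (simp add: fun_eq_iff)

lemma perm_conj_perm_conj:
  "\<tau>1 permutes S \<Longrightarrow> \<tau>2 permutes S \<Longrightarrow> perm_conj \<tau>1 (perm_conj \<tau>2 \<sigma>) = perm_conj (\<tau>1 \<circ> \<tau>2) \<sigma>"
  by (simp add: perm_conj_def o_assoc o_inv_distrib permutes_bij)

lemma perm_conj_inv_cancel: "\<tau> permutes S \<Longrightarrow> perm_conj (inv \<tau>) (perm_conj \<tau> \<sigma>) = \<sigma>"
  by (simp add: perm_conj_perm_conj[OF permutes_inv] permutes_inv_o(2)) (simp add: perm_conj_def)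

lemma funpow_perm_conj:
  assumes "\<tau> permutes S"
  shows "perm_conj \<tau> \<sigma> ^^ k = perm_conj \<tau> (\<sigma> ^^ k)"
proof (induction k)
  case 0
  then show ?case
    using permutes_inverses(1)[OF assms] by (simp add: perm_conj_def fun_eq_iff)
next
  case (Suc k)
  have "perm_conj \<tau> \<sigma> ^^ Suc k = perm_conj \<tau> \<sigma> \<circ> perm_conj \<tau> (\<sigma> ^^ k)"
    using Suc by simp
  also have "\<dots> = perm_conj \<tau> (\<sigma> ^^ Suc k)"
    by (simp only: perm_conj_comp[OF assms] funpow.simps(2))
  finally show ?case .
qed

lemma perm_orbit_perm_conj:
  assumes "\<tau> permutes S"
  shows "perm_orbit (perm_conj \<tau> \<sigma>) (\<tau> x) = \<tau> ` perm_orbit \<sigma> x"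
  unfolding perm_orbit_def funpow_perm_conj[OF assms] using perm_conj_apply[OF assms] by auto

lemma perm_cycles_perm_conj:
  assumes "\<tau> permutes {..<n}"
  shows "perm_cycles (perm_conj \<tau> \<sigma>) n = (\<lambda>c. \<tau> ` c) ` perm_cycles \<sigma> n"
proof -
  have "perm_cycles (perm_conj \<tau> \<sigma>) n = perm_orbit (perm_conj \<tau> \<sigma>) ` \<tau> ` {..<n}"
    unfolding perm_cycles_def permutes_image[OF assms] ..
  then show ?thesis
    unfolding perm_cycles_def image_comp by (simp add: comp_def perm_orbit_perm_conj[OF assms])
qed

lemma inj_image_permutes: "\<tau> permutes S \<Longrightarrow> inj (\<lambda>c. \<tau> ` c)"
  by (meson inj_image_eq_iff injI permutes_inj)

lemma card_perm_cycles_perm_conj: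
  assumes "\<tau> permutes {..<n}"
  shows "card (perm_cycles (perm_conj \<tau> \<sigma>) n) = card (perm_cycles \<sigma> n)"
  using inj_image_permutes[OF assms]
  by (simp add: perm_cycles_perm_conj[OF assms] card_image inj_on_subset)

lemma card_cycles_of_size_perm_conj:
  assumes "\<tau> permutes {..<n}"
  shows "card {c \<in> perm_cycles (perm_conj \<tau> \<sigma>) n. card c = j} = card {c \<in> perm_cycles \<sigma> n. card c = j}"
proof -
  have "card (\<tau> ` c) = card c" for c
    using permutes_inj[OF assms] by (simp add: card_image inj_on_subset)
  then have "{c \<in> perm_cycles (perm_conj \<tau> \<sigma>) n. card c = j} = (\<lambda>c. \<tau> ` c) ` {c \<in> perm_cycles \<sigma> n. card c = j}"
    using perm_cycles_perm_conj[OF assms] by auto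
  then show ?thesis
    using inj_image_permutes[OF assms] by (simp add: card_image inj_on_subset)
qed

lemma transitive_pair_perm_conj:
  assumes \<tau>: "\<tau> permutes {..<n}" and "transitive_pair \<sigma> \<alpha> n"
  shows "transitive_pair (perm_conj \<tau> \<sigma>) (perm_conj \<tau> \<alpha>) n"
proof -
  define R where "R = {(u, \<sigma> u) | u. True} \<union> {(u, \<alpha> u) | u. True}"
  define R' where "R' = {(u, perm_conj \<tau> \<sigma> u) | u. True} \<union> {(u, perm_conj \<tau> \<alpha> u) | u. True}"
  have edge: "(\<tau> x, \<tau> y) \<in> R'" if "(x, y) \<in> R" for x y
    using that perm_conj_apply[OF \<tau>] unfolding R_def R'_def by auto
  have image: "(\<tau> x, \<tau> y) \<in> R'\<^sup>*" if "(x, y) \<in> R\<^sup>*" for x y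
    using that
  proof (induction rule: rtrancl_induct)
    case (step y z)
    then show ?case
      using edge rtrancl_into_rtrancl by metis
  qed simp
  show ?thesis
    unfolding transitive_pair_def R'_def[symmetric]
  proof (intro allI impI)
    fix x y assume "x < n" "y < n"
    then have "inv \<tau> x < n" "inv \<tau> y < n"
      using permutes_in_image[OF permutes_inv[OF \<tau>]] by auto
    then have "(inv \<tau> x, inv \<tau> y) \<in> R\<^sup>*"
      using assms(2) unfolding transitive_pair_def R_def by blast
    then show "(x, y) \<in> R'\<^sup>*"
      using image permutes_inverses(1)[OF \<tau>] by metis
  qed
qed

lemma labelled_bip_mapsD:
  assumes "(\<sigma>, \<alpha>) \<in> labelled_bip_maps g h n"
  shows "\<sigma> permutes {..<n}" "\<alpha> permutes {..<n}" "transitive_pair \<sigma> \<alpha> n"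
    "\<And>j. j \<ge> 1 \<Longrightarrow> card {c \<in> perm_cycles (\<sigma> \<circ> \<alpha>) n. card c = j} = h j"
    "int (card (perm_cycles \<sigma> n)) + int (card (perm_cycles \<alpha> n)) - int n
       + int (card (perm_cycles (\<sigma> \<circ> \<alpha>) n)) = 2 - 2 * int g"
  using assms unfolding labelled_bip_maps_def by auto

lemma relabel_in_labelled_bip_maps:
  assumes \<tau>: "\<tau> permutes {..<n}" and M: "M \<in> labelled_bip_maps g h n"
  shows "relabel \<tau> M \<in> labelled_bip_maps g h n"
proof -
  obtain \<sigma> \<alpha> where M_eq: "M = (\<sigma>, \<alpha>)"
    by fastforce
  have comp: "perm_conj \<tau> \<sigma> \<circ> perm_conj \<tau> \<alpha> = perm_conj \<tau> (\<sigma> \<circ> \<alpha>)"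
    by (rule perm_conj_comp[OF \<tau>])
  show ?thesis
    using M permutes_perm_conj[OF \<tau>] transitive_pair_perm_conj[OF \<tau>]
    unfolding M_eq relabel_def labelled_bip_maps_def
    by (simp add: comp card_perm_cycles_perm_conj[OF \<tau>] card_cycles_of_size_perm_conj[OF \<tau>])
qed

lemma relabel_relabel:
  "\<tau>1 permutes S \<Longrightarrow> \<tau>2 permutes S \<Longrightarrow> relabel \<tau>1 (relabel \<tau>2 M) = relabel (\<tau>1 \<circ> \<tau>2) M"
  by (simp add: relabel_def perm_conj_perm_conj)

lemma relabel_inv_cancel: "\<tau> permutes S \<Longrightarrow> relabel (inv \<tau>) (relabel \<tau> M) = M"
  by (simp add: relabel_def perm_conj_inv_cancel)

lemma relabel_id: "relabel id M = M"
  by (simp add: relabel_def perm_conj_def)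

lemma finite_labelled_bip_maps: "finite (labelled_bip_maps g h n)"
proof -
  have "labelled_bip_maps g h n \<subseteq> {\<sigma>. \<sigma> permutes {..<n}} \<times> {\<alpha>. \<alpha> permutes {..<n}}"
    unfolding labelled_bip_maps_def by auto
  then show ?thesis
    using finite_permutations[of "{..<n}"] by (simp add: finite_subset)
qed

definition root_fixing_perms :: "nat \<Rightarrow> (nat \<Rightarrow> nat) set" where
  "root_fixing_perms n = {\<tau>. \<tau> permutes {..<n} \<and> \<tau> 0 = 0}"

lemma root_fixing_perms_eq: "root_fixing_perms n = {\<tau>. \<tau> permutes {1..<n}}"
proof -
  have "\<tau> permutes {1..<n}" if "\<tau> permutes {..<n}" "\<tau> 0 = 0" for \<tau>
  proof (rule permutes_superset[OF that(1)])
    fix x assume "x \<in> {..<n} - {1..<n}"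
    then have "x = 0"
      by auto
    then show "\<tau> x = x"
      using that(2) by simp
  qed
  moreover have "\<tau> permutes {..<n}" "\<tau> 0 = 0" if "\<tau> permutes {1..<n}" for \<tau>
    using permutes_subset[OF that, of "{..<n}"] permutes_not_in[OF that, of 0]
    by (auto simp: subset_eq)
  ultimately show ?thesis
    unfolding root_fixing_perms_def by blast
qed

lemma card_root_fixing_perms: "card (root_fixing_perms n) = fact (n - 1)"
  using card_permutations[of "{1..<n}" "n - 1"] by (simp add: root_fixing_perms_eq)

lemma root_fixing_perms_permutes: "\<tau> \<in> root_fixing_perms n \<Longrightarrow> \<tau> permutes {..<n}"
  by (simp add: root_fixing_perms_def)

lemma root_fixing_perms_inv: "\<tau> \<in> root_fixing_perms n \<Longrightarrow> inv \<tau> \<in> root_fixing_perms n"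
  unfolding root_fixing_perms_def using permutes_inv permutes_inv_eq by fastforce

lemma root_fixing_perms_comp:
  "\<tau>1 \<in> root_fixing_perms n \<Longrightarrow> \<tau>2 \<in> root_fixing_perms n \<Longrightarrow> \<tau>1 \<circ> \<tau>2 \<in> root_fixing_perms n"
  unfolding root_fixing_perms_def by (auto intro: permutes_compose)

text \<open>A relabelling fixing the map commutes with \<open>\<sigma>\<close> and \<open>\<alpha>\<close>, hence fixes every edge
  reachable from the root edge \<open>0\<close>, i.e. every edge of a connected map.\<close>

lemma relabel_fixed_imp_id:
  assumes "\<tau> \<in> root_fixing_perms n" and "0 < n"
    and "relabel \<tau> (\<sigma>, \<alpha>) = (\<sigma>, \<alpha>)" and "transitive_pair \<sigma> \<alpha> n"
  shows "\<tau> = id"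
proof -
  have \<tau>: "\<tau> permutes {..<n}" "\<tau> 0 = 0"
    using assms(1) by (auto simp: root_fixing_perms_def)
  have commute: "\<tau> (\<sigma> x) = \<sigma> (\<tau> x)" "\<tau> (\<alpha> x) = \<alpha> (\<tau> x)" for x
    using assms(3) perm_conj_apply[OF \<tau>(1), of \<sigma> x] perm_conj_apply[OF \<tau>(1), of \<alpha> x]
    by (auto simp: relabel_def)
  define R where "R = {(u, \<sigma> u) | u. True} \<union> {(u, \<alpha> u) | u. True}"
  have "\<tau> y = y" if "(0, y) \<in> R\<^sup>*" for y
    using that
  proof (induction rule: rtrancl_induct)
    case (step y z)
    then show ?case
      using commute unfolding R_def by auto
  qed (use \<tau>(2) in simp)
  moreover have "(0, y) \<in> R\<^sup>*" if "y < n" for y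
    using assms(2,4) that unfolding transitive_pair_def R_def by blast
  ultimately show ?thesis
    using permutes_not_in[OF \<tau>(1)] by (metis eq_id_iff lessThan_iff)
qed

definition relabel_orbit ::
  "nat \<Rightarrow> (nat \<Rightarrow> nat) \<times> (nat \<Rightarrow> nat) \<Rightarrow> ((nat \<Rightarrow> nat) \<times> (nat \<Rightarrow> nat)) set" where
  "relabel_orbit n M = (\<lambda>\<tau>. relabel \<tau> M) ` root_fixing_perms n"

lemma relabel_orbit_eq:
  assumes "Z \<in> relabel_orbit n M"
  shows "relabel_orbit n Z = relabel_orbit n M"
proof -
  obtain \<tau> where \<tau>: "\<tau> \<in> root_fixing_perms n" and Z: "Z = relabel \<tau> M"
    using assms unfolding relabel_orbit_def by blast
  note permutes = root_fixing_perms_permutes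
  have "relabel \<rho> Z = relabel (\<rho> \<circ> \<tau>) M" if "\<rho> \<in> root_fixing_perms n" for \<rho>
    using Z relabel_relabel[OF permutes permutes] that \<tau> by simp
  moreover have "relabel \<rho> M = relabel (\<rho> \<circ> inv \<tau>) Z" if "\<rho> \<in> root_fixing_perms n" for \<rho>
    using Z relabel_relabel[OF permutes permutes] relabel_inv_cancel[OF permutes[OF \<tau>]]
      root_fixing_perms_inv[OF \<tau>] that by (metis relabel_relabel)
  ultimately show ?thesis
    unfolding relabel_orbit_def using \<tau> root_fixing_perms_comp root_fixing_perms_inv
    by (auto intro!: image_eqI)
qed

lemma card_relabel_orbit:
  assumes "0 < n" and M: "(\<sigma>, \<alpha>) \<in> labelled_bip_maps g h n"
  shows "card (relabel_orbit n (\<sigma>, \<alpha>)) = fact (n - 1)"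
proof -
  note permutes = root_fixing_perms_permutes
  have "inj_on (\<lambda>\<tau>. relabel \<tau> (\<sigma>, \<alpha>)) (root_fixing_perms n)"
  proof (rule inj_onI)
    fix \<tau>1 \<tau>2
    assume \<tau>: "\<tau>1 \<in> root_fixing_perms n" "\<tau>2 \<in> root_fixing_perms n"
      and eq: "relabel \<tau>1 (\<sigma>, \<alpha>) = relabel \<tau>2 (\<sigma>, \<alpha>)"
    let ?\<rho> = "inv \<tau>2 \<circ> \<tau>1"
    have inv2: "inv \<tau>2 \<in> root_fixing_perms n"
      by (rule root_fixing_perms_inv[OF \<tau>(2)])
    have "relabel ?\<rho> (\<sigma>, \<alpha>) = relabel (inv \<tau>2) (relabel \<tau>1 (\<sigma>, \<alpha>))"
      using relabel_relabel[OF permutes[OF inv2] permutes[OF \<tau>(1)]] by simp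
    also have "\<dots> = (\<sigma>, \<alpha>)"
      unfolding eq by (rule relabel_inv_cancel[OF permutes[OF \<tau>(2)]])
    finally have "?\<rho> = id"
      using relabel_fixed_imp_id[OF root_fixing_perms_comp[OF inv2 \<tau>(1)] \<open>0 < n\<close>]
        labelled_bip_mapsD(3)[OF M] by blast
    moreover have "\<tau>2 \<circ> ?\<rho> = \<tau>1"
      using permutes_inv_o(1)[OF permutes[OF \<tau>(2)]] by (simp add: o_assoc)
    ultimately show "\<tau>1 = \<tau>2"
      by simp
  qed
  then show ?thesis
    unfolding relabel_orbit_def by (simp add: card_image card_root_fixing_perms)
qed

lemma fact_dvd_card_labelled_bip_maps:
  assumes "0 < n"
  shows "fact (n - 1) dvd card (labelled_bip_maps g h n)"
proof -
  let ?L = "labelled_bip_maps g h n"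
  have "id \<in> root_fixing_perms n"
    by (simp add: root_fixing_perms_def permutes_id)
  then have "M \<in> relabel_orbit n M" for M
    unfolding relabel_orbit_def using relabel_id by (metis image_eqI)
  moreover have "relabel_orbit n M \<subseteq> ?L" if "M \<in> ?L" for M
    using that relabel_in_labelled_bip_maps
    unfolding relabel_orbit_def root_fixing_perms_def by blast
  ultimately have union: "\<Union> (relabel_orbit n ` ?L) = ?L"
    by blast
  have "fact (n - 1) dvd card (\<Union> (relabel_orbit n ` ?L))"
  proof (rule dvd_partition)
    show "finite (\<Union> (relabel_orbit n ` ?L))"
      unfolding union by (rule finite_labelled_bip_maps)
    show "\<forall>c\<in>relabel_orbit n ` ?L. fact (n - 1) dvd card c"
      using card_relabel_orbit[OF assms] by auto
    show "\<forall>c1\<in>relabel_orbit n ` ?L. \<forall>c2\<in>relabel_orbit n ` ?L. c1 \<noteq> c2 \<longrightarrow> c1 \<inter> c2 = {}"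
      using relabel_orbit_eq by blast
  qed
  then show ?thesis
    unfolding union .
qed

section \<open>Growing a face by new leaves\<close>

lemma card_le_mult_if_fibres_le:
  assumes "finite D" "f ` D \<subseteq> E" "finite E" "\<And>e. e \<in> E \<Longrightarrow> card {d \<in> D. f d = e} \<le> k"
  shows "card D \<le> k * card E"
proof -
  have "D = (\<Union>e\<in>E. {d \<in> D. f d = e})"
    using assms(2) by auto
  then have "card D \<le> (\<Sum>e\<in>E. card {d \<in> D. f d = e})"
    by (metis card_UN_le assms(3))
  also have "\<dots> \<le> (\<Sum>e\<in>E. k)"
    using assms(4) by (meson sum_mono)
  finally show ?thesis
    by (simp add: mult.commute)
qed

text \<open>Backwards along the chain: if \<open>\<rho>\<close> fixes \<open>Suc k\<close> then
  \<open>\<sigma>' (\<rho> k) = \<rho> (\<sigma> k) = \<sigma>' k\<close>, so \<open>\<rho> k = k\<close> by injectivity.\<close>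

lemma permutes_lessThan_if_fixes_chain_end:
  assumes \<rho>: "\<rho> permutes {..<n}" and "\<rho> (n - 1) = n - 1"
    and intertwines: "\<And>x. \<rho> (\<sigma> x) = \<sigma>' (\<rho> x)"
    and \<sigma>_succ: "\<And>k. m \<le> k \<Longrightarrow> k < n - 1 \<Longrightarrow> \<sigma> k = Suc k"
    and \<sigma>'_succ: "\<And>k. m \<le> k \<Longrightarrow> k < n - 1 \<Longrightarrow> \<sigma>' k = Suc k"
    and "inj \<sigma>'" and "m < n"
  shows "\<rho> permutes {..<m}"
proof -
  have chain: "\<rho> (n - 1 - i) = n - 1 - i" if "i < n - m" for i
    using that
  proof (induction i)
    case (Suc i)
    define k where "k = n - 1 - Suc i"
    have k: "m \<le> k" "k < n - 1" "Suc k = n - 1 - i"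
      using Suc.prems \<open>m < n\<close> by (auto simp: k_def)
    then have "\<sigma>' (\<rho> k) = \<sigma>' k"
      using Suc intertwines[of k] \<sigma>_succ \<sigma>'_succ by simp
    then show ?case
      using \<open>inj \<sigma>'\<close> by (simp add: inj_eq k_def)
  qed (use \<open>\<rho> (n - 1) = n - 1\<close> in simp)
  have "\<rho> k = k" if "m \<le> k" "k < n" for k
  proof -
    have "n - 1 - k < n - m" "n - 1 - (n - 1 - k) = k"
      using that by linarith+
    then show ?thesis
      using chain by metis
  qed
  then show ?thesis
    by (rule permutes_superset[OF \<rho>]) auto
qed

locale face_growth =
  fixes g m n j0 p :: nat and hA hB :: "nat \<Rightarrow> nat"
  assumes m_pos: "1 \<le> m" and m_less: "m < n" and p_eq: "p = j0 + (n - m)" and j0_pos: "1 \<le> j0"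
    and face_counts: "\<And>j. hB j + of_bool (j0 = j) = hA j + of_bool (p = j)"
begin

abbreviation "A \<equiv> labelled_bip_maps g hA m"
abbreviation "B \<equiv> labelled_bip_maps g hB n"

definition corners :: "(nat \<Rightarrow> nat) \<times> (nat \<Rightarrow> nat) \<Rightarrow> nat set" where
  "corners M = {u. u < m \<and> card (perm_orbit (fst M \<circ> snd M) u) = j0}"

text \<open>The new edges \<open>m, \<dots>, n - 1\<close> are leaves (fixed points of \<open>\<alpha>\<close>) inserted into the rotation
  of \<open>\<sigma>\<close> right after \<open>\<alpha> u\<close>; they lengthen exactly the face through \<open>u\<close> by \<open>n - m\<close>.\<close>

definition grow_face ::
  "(nat \<Rightarrow> nat) \<times> (nat \<Rightarrow> nat) \<Rightarrow> nat \<Rightarrow> (nat \<Rightarrow> nat) \<times> (nat \<Rightarrow> nat)" where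
  "grow_face M u = (insert_chain (fst M) (snd M u) m n, snd M)"

lemma corners_subset: "corners M \<subseteq> {..<m}"
  by (auto simp: corners_def)

lemma card_corners:
  assumes "(\<sigma>, \<alpha>) \<in> A"
  shows "card (corners (\<sigma>, \<alpha>)) = j0 * hA j0"
  using card_points_on_cycles_of_size[OF permutes_compose[OF labelled_bip_mapsD(2,1)[OF assms]]]
    labelled_bip_mapsD(4)[OF assms j0_pos]
  by (simp add: corners_def)

lemma grow_face_in_B:
  assumes M: "(\<sigma>, \<alpha>) \<in> A" and u: "u \<in> corners (\<sigma>, \<alpha>)"
  shows "grow_face (\<sigma>, \<alpha>) u \<in> B"
proof -
  note M_facts = labelled_bip_mapsD[OF M]
  have "u < m" and face_u: "card (perm_orbit (\<sigma> \<circ> \<alpha>) u) = j0"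
    using u by (auto simp: corners_def)
  have "\<alpha> u < m"
    using \<open>u < m\<close> M_facts(2) permutes_in_image by fastforce
  interpret \<sigma>: chain_insertion \<sigma> "\<alpha> u" m n
    using M_facts(1) \<open>\<alpha> u < m\<close> m_less by unfold_locales
  interpret \<sigma>\<alpha>: chain_insertion "\<sigma> \<circ> \<alpha>" u m n
    using permutes_compose[OF M_facts(2,1)] \<open>u < m\<close> m_less by unfold_locales
  let ?\<sigma>' = "insert_chain \<sigma> (\<alpha> u) m n"
  have comp: "?\<sigma>' \<circ> \<alpha> = insert_chain (\<sigma> \<circ> \<alpha>) u m n"
    by (rule insert_chain_comp[OF M_facts(1,2) \<open>u < m\<close> m_less])
  have faces: "card {c \<in> perm_cycles (?\<sigma>' \<circ> \<alpha>) n. card c = j} = hB j" if "j \<ge> 1" for j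
    using \<sigma>\<alpha>.card_cycles_of_size_insert_chain[of j] face_counts[of j] M_facts(4)[OF that]
    unfolding comp face_u p_eq by simp
  have "card (perm_cycles \<alpha> n) = card (perm_cycles \<alpha> m) + (n - m)"
    by (rule card_perm_cycles_extend[OF M_facts(2) less_imp_le[OF m_less]])
  then have euler: "int (card (perm_cycles ?\<sigma>' n)) + int (card (perm_cycles \<alpha> n)) - int n
      + int (card (perm_cycles (?\<sigma>' \<circ> \<alpha>) n)) = 2 - 2 * int g"
    using M_facts(5) m_less
    unfolding comp \<sigma>.card_perm_cycles_insert_chain \<sigma>\<alpha>.card_perm_cycles_insert_chain by simp
  have "\<alpha> permutes {..<n}"
    using M_facts(2) by (rule permutes_subset) (use m_less in auto)
  then show ?thesis
    unfolding grow_face_def labelled_bip_maps_def mem_Collect_eq case_prod_conv fst_conv snd_conv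
    using \<sigma>.insert_chain_permutes \<sigma>.transitive_pair_insert_chain[OF M_facts(3)] faces euler
    by blast
qed

lemma grow_face_inj:
  assumes M1: "(\<sigma>1, \<alpha>1) \<in> A" "u1 \<in> corners (\<sigma>1, \<alpha>1)"
    and M2: "(\<sigma>2, \<alpha>2) \<in> A" "u2 \<in> corners (\<sigma>2, \<alpha>2)"
    and eq: "grow_face (\<sigma>1, \<alpha>1) u1 = grow_face (\<sigma>2, \<alpha>2) u2"
  shows "\<sigma>1 = \<sigma>2 \<and> \<alpha>1 = \<alpha>2 \<and> u1 = u2"
proof -
  note F1 = labelled_bip_mapsD[OF M1(1)] and F2 = labelled_bip_mapsD[OF M2(1)]
  have \<alpha>: "\<alpha>1 = \<alpha>2" and \<sigma>: "insert_chain \<sigma>1 (\<alpha>1 u1) m n = insert_chain \<sigma>2 (\<alpha>1 u2) m n"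
    using eq by (auto simp: grow_face_def)
  have "u1 < m" "u2 < m"
    using M1(2) M2(2) corners_subset by blast+
  then have "\<alpha>1 u1 < m" "\<alpha>1 u2 < m"
    using F1(2) permutes_in_image by fastforce+
  then have "chain_insertion \<sigma>1 (\<alpha>1 u1) m n" "chain_insertion \<sigma>2 (\<alpha>1 u2) m n"
    using F1(1) F2(1) m_less by unfold_locales
  then have "\<sigma>1 = \<sigma>2" "\<alpha>1 u1 = \<alpha>1 u2"
    using insert_chain_inj \<sigma> by blast+
  moreover have "u1 = u2"
    using \<open>\<alpha>1 u1 = \<alpha>1 u2\<close> permutes_inj[OF F1(2)] by (meson injD)
  ultimately show ?thesis
    using \<alpha> by blast
qed

definition growth_data ::
  "(((nat \<Rightarrow> nat) \<times> (nat \<Rightarrow> nat)) \<times> nat \<times> (nat \<Rightarrow> nat)) set" where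
  "growth_data = Sigma A (\<lambda>M. corners M \<times> {\<pi>. \<pi> permutes {..<n}})"

definition relabelled_growth ::
  "((nat \<Rightarrow> nat) \<times> (nat \<Rightarrow> nat)) \<times> nat \<times> (nat \<Rightarrow> nat) \<Rightarrow> ((nat \<Rightarrow> nat) \<times> (nat \<Rightarrow> nat)) \<times> nat"
  where "relabelled_growth = (\<lambda>(M, u, \<pi>). (relabel \<pi> (grow_face M u), \<pi> (n - 1)))"

lemma card_growth_data: "card growth_data = card A * (j0 * hA j0 * fact n)"
proof -
  have "finite (corners M \<times> {\<pi>. \<pi> permutes {..<n}})" for M
    using finite_subset[OF corners_subset] finite_permutations by blast
  then have "card growth_data = (\<Sum>M\<in>A. card (corners M) * fact n)"
    unfolding growth_data_def
    by (simp add: card_SigmaI finite_labelled_bip_maps card_cartesian_product card_permutations)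
  also have "\<dots> = (\<Sum>M\<in>A. j0 * hA j0 * fact n)"
    using card_corners by (intro sum.cong) auto
  finally show ?thesis
    by simp
qed

lemma relabelled_growth_into: "relabelled_growth ` growth_data \<subseteq> B \<times> {..<n}"
proof
  fix z assume "z \<in> relabelled_growth ` growth_data"
  then obtain d where d: "d \<in> growth_data" and z: "z = relabelled_growth d"
    by blast
  obtain \<sigma> \<alpha> u \<pi> where d_eq: "d = ((\<sigma>, \<alpha>), u, \<pi>)"
    by (metis prod.exhaust)
  have "(\<sigma>, \<alpha>) \<in> A" "u \<in> corners (\<sigma>, \<alpha>)" and \<pi>: "\<pi> permutes {..<n}"
    using d by (auto simp: growth_data_def d_eq)
  then have "relabel \<pi> (grow_face (\<sigma>, \<alpha>) u) \<in> B"
    using relabel_in_labelled_bip_maps grow_face_in_B by blast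
  moreover have "\<pi> (n - 1) < n"
    using permutes_in_image[OF \<pi>, of "n - 1"] m_less by simp
  ultimately show "z \<in> B \<times> {..<n}"
    by (simp add: z d_eq relabelled_growth_def)
qed

lemma growth_dataD:
  assumes "((\<sigma>, \<alpha>), u, \<pi>) \<in> growth_data"
  shows "(\<sigma>, \<alpha>) \<in> A" "u \<in> corners (\<sigma>, \<alpha>)" "\<pi> permutes {..<n}"
  using assms by (auto simp: growth_data_def)

lemma same_relabelled_growth_imp_permutes_old:
  assumes d: "((\<sigma>, \<alpha>), u, \<pi>) \<in> growth_data" and d': "((\<sigma>', \<alpha>'), u', \<pi>') \<in> growth_data"
    and eq: "relabelled_growth ((\<sigma>, \<alpha>), u, \<pi>) = relabelled_growth ((\<sigma>', \<alpha>'), u', \<pi>')"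
  shows "inv \<pi> \<circ> \<pi>' permutes {..<m}"
proof -
  note D = growth_dataD[OF d] and D' = growth_dataD[OF d']
  define \<rho> where "\<rho> = inv \<pi> \<circ> \<pi>'"
  have \<rho>: "\<rho> permutes {..<n}"
    unfolding \<rho>_def using permutes_compose[OF D'(3) permutes_inv[OF D(3)]] .
  have relabel_eq: "relabel \<pi> (grow_face (\<sigma>, \<alpha>) u) = relabel \<pi>' (grow_face (\<sigma>', \<alpha>') u')"
    and last_eq: "\<pi> (n - 1) = \<pi>' (n - 1)"
    using eq by (auto simp: relabelled_growth_def)
  have "relabel \<rho> (grow_face (\<sigma>', \<alpha>') u') = relabel (inv \<pi>) (relabel \<pi>' (grow_face (\<sigma>', \<alpha>') u'))"
    unfolding \<rho>_def using relabel_relabel[OF permutes_inv[OF D(3)] D'(3)] by simp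
  also have "\<dots> = grow_face (\<sigma>, \<alpha>) u"
    unfolding relabel_eq[symmetric] by (rule relabel_inv_cancel[OF D(3)])
  finally have "perm_conj \<rho> (insert_chain \<sigma>' (\<alpha>' u') m n) = insert_chain \<sigma> (\<alpha> u) m n"
    by (simp add: relabel_def grow_face_def)
  then have intertwines: "\<rho> (insert_chain \<sigma>' (\<alpha>' u') m n x) = insert_chain \<sigma> (\<alpha> u) m n (\<rho> x)" for x
    using perm_conj_apply[OF \<rho>] by metis
  have "\<rho> (n - 1) = n - 1"
    unfolding \<rho>_def using last_eq permutes_inverses(2)[OF D(3)] by (metis comp_apply)
  have "u < m" "u' < m"
    using D(2) D'(2) corners_subset by blast+
  then have "\<alpha> u < m" "\<alpha>' u' < m"
    using permutes_in_image[OF labelled_bip_mapsD(2)[OF D(1)], of u]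
      permutes_in_image[OF labelled_bip_mapsD(2)[OF D'(1)], of u'] by simp_all
  have "inj (insert_chain \<sigma> (\<alpha> u) m n)"
    using grow_face_in_B[OF D(1,2)] labelled_bip_mapsD(1) permutes_inj
    unfolding grow_face_def by fastforce
  then show ?thesis
    unfolding \<rho>_def[symmetric]
    using \<open>\<rho> (n - 1) = n - 1\<close> \<open>\<alpha> u < m\<close> \<open>\<alpha>' u' < m\<close>
    by (intro permutes_lessThan_if_fixes_chain_end[OF \<rho>, of "insert_chain \<sigma>' (\<alpha>' u') m n"
          "insert_chain \<sigma> (\<alpha> u) m n"] intertwines m_less)
      (simp_all add: insert_chain_middle)
qed

lemma relabelled_growth_inj_same_perm:
  assumes d1: "d1 \<in> growth_data" and d2: "d2 \<in> growth_data"
    and eq: "relabelled_growth d1 = relabelled_growth d2" and same_perm: "snd (snd d1) = snd (snd d2)"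
  shows "d1 = d2"
proof -
  obtain \<sigma>1 \<alpha>1 u1 \<pi> where d1_eq: "d1 = ((\<sigma>1, \<alpha>1), u1, \<pi>)"
    by (metis prod.exhaust)
  moreover obtain \<sigma>2 \<alpha>2 u2 \<pi>2 where "d2 = ((\<sigma>2, \<alpha>2), u2, \<pi>2)"
    by (metis prod.exhaust)
  ultimately have d2_eq: "d2 = ((\<sigma>2, \<alpha>2), u2, \<pi>)"
    using same_perm by simp
  note D1 = growth_dataD[OF d1[unfolded d1_eq]] and D2 = growth_dataD[OF d2[unfolded d2_eq]]
  have "relabel (inv \<pi>) (relabel \<pi> (grow_face (\<sigma>1, \<alpha>1) u1))
      = relabel (inv \<pi>) (relabel \<pi> (grow_face (\<sigma>2, \<alpha>2) u2))"
    using eq by (simp add: relabelled_growth_def d1_eq d2_eq)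
  then have "grow_face (\<sigma>1, \<alpha>1) u1 = grow_face (\<sigma>2, \<alpha>2) u2"
    by (simp add: relabel_inv_cancel[OF D1(3)])
  then show ?thesis
    using grow_face_inj[OF D1(1,2) D2(1,2)] by (simp add: d1_eq d2_eq)
qed

lemma card_fibre_relabelled_growth: "card {d \<in> growth_data. relabelled_growth d = e} \<le> fact m"
proof (cases "{d \<in> growth_data. relabelled_growth d = e} = {}")
  case False
  let ?F = "{d \<in> growth_data. relabelled_growth d = e}"
  have tuple: "\<exists>\<sigma> \<alpha> u \<pi>. d = ((\<sigma>, \<alpha>), u, \<pi>)" for d :: "((nat \<Rightarrow> nat) \<times> (nat \<Rightarrow> nat)) \<times> nat \<times> (nat \<Rightarrow> nat)"
    by (metis prod.exhaust)
  obtain d0 where "d0 \<in> ?F"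
    using False by blast
  moreover obtain \<sigma>0 \<alpha>0 u0 \<pi>0 where "d0 = ((\<sigma>0, \<alpha>0), u0, \<pi>0)"
    using tuple by blast
  ultimately have d0: "((\<sigma>0, \<alpha>0), u0, \<pi>0) \<in> growth_data"
    and e: "relabelled_growth ((\<sigma>0, \<alpha>0), u0, \<pi>0) = e"
    by auto
  define \<psi> where "\<psi> d = inv \<pi>0 \<circ> snd (snd d)" for d ::
    "((nat \<Rightarrow> nat) \<times> (nat \<Rightarrow> nat)) \<times> nat \<times> (nat \<Rightarrow> nat)"
  have "\<psi> d \<in> {\<rho>. \<rho> permutes {..<m}}" if "d \<in> ?F" for d
  proof -
    obtain \<sigma> \<alpha> u \<pi> where d: "d = ((\<sigma>, \<alpha>), u, \<pi>)"
      using tuple by blast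
    have "((\<sigma>, \<alpha>), u, \<pi>) \<in> growth_data"
      "relabelled_growth ((\<sigma>0, \<alpha>0), u0, \<pi>0) = relabelled_growth ((\<sigma>, \<alpha>), u, \<pi>)"
      using that e by (simp_all add: d)
    then show ?thesis
      using same_relabelled_growth_imp_permutes_old[OF d0] by (simp add: \<psi>_def d)
  qed
  moreover have "inj_on \<psi> ?F"
  proof (rule inj_onI)
    fix d1 d2 assume "d1 \<in> ?F" "d2 \<in> ?F" and "\<psi> d1 = \<psi> d2"
    then have "\<pi>0 \<circ> \<psi> d1 = \<pi>0 \<circ> \<psi> d2"
      by simp
    then have "snd (snd d1) = snd (snd d2)"
      using permutes_inv_o(1)[OF growth_dataD(3)[OF d0]] by (simp add: \<psi>_def o_assoc)
    then show "d1 = d2"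
      using relabelled_growth_inj_same_perm \<open>d1 \<in> ?F\<close> \<open>d2 \<in> ?F\<close> by simp
  qed
  ultimately have "card ?F \<le> card {\<rho>. \<rho> permutes {..<m}}"
    by (intro card_inj_on_le) (auto simp: finite_permutations)
  then show ?thesis
    by (simp add: card_permutations)
qed (simp only: card.empty le0)

lemma labelled_counts_ineq: "card A * (j0 * hA j0 * fact n) \<le> fact m * (card B * n)"
proof -
  have "growth_data \<subseteq> A \<times> ({..<m} \<times> {\<pi>. \<pi> permutes {..<n}})"
    unfolding growth_data_def using corners_subset by auto
  then have "finite growth_data"
    using finite_labelled_bip_maps finite_permutations finite_subset by blast
  then have "card growth_data \<le> fact m * card (B \<times> {..<n})"
    using card_le_mult_if_fibres_le[OF _ relabelled_growth_into] card_fibre_relabelled_growth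
      finite_labelled_bip_maps by blast
  then show ?thesis
    by (simp add: card_growth_data card_cartesian_product)
qed

lemma rooted_counts_ineq: "j0 * hA j0 * (card A div fact (m - 1)) \<le> m * (card B div fact (n - 1))"
proof -
  define qA where "qA = card A div fact (m - 1)"
  define qB where "qB = card B div fact (n - 1)"
  have B: "card B = fact (n - 1) * qB"
    using fact_dvd_card_labelled_bip_maps[of n g hB] m_less by (simp add: qB_def)
  have A: "fact (m - 1) * qA \<le> card A"
    unfolding qA_def by (simp add: mult.commute div_times_less_eq_dividend)
  have fact_m: "fact m = m * fact (m - 1)" and fact_n: "fact n = n * fact (n - 1)"
    using fact_reduce[of m, where 'a = nat] fact_reduce[of n, where 'a = nat] m_pos m_less by simp_all
  let ?K = "fact (m - 1) * (fact (n - 1) * n) :: nat"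
  have "?K * (j0 * hA j0 * qA) = (fact (m - 1) * qA) * (j0 * hA j0 * fact n)"
    unfolding fact_n by (simp add: algebra_simps)
  also have "\<dots> \<le> card A * (j0 * hA j0 * fact n)"
    using A by (rule mult_right_mono) simp
  also have "\<dots> \<le> fact m * (card B * n)"
    by (rule labelled_counts_ineq)
  also have "\<dots> = ?K * (m * qB)"
    unfolding fact_m B by (simp add: algebra_simps)
  finally show ?thesis
    using m_less by (simp add: qA_def qB_def)
qed

end

section \<open>Face degree sequences and the ratio of map counts\<close>

lemma fsize_eq_sum:
  assumes "finite S" "{j. h j \<noteq> 0} \<subseteq> S"
  shows "fsize h = (\<Sum>j\<in>S. int j * h j)"
  unfolding fsize_def using assms by (intro sum.mono_neutral_left) auto

lemma sum_le_fsize: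
  assumes "face_deg_seq f" "finite T"
  shows "(\<Sum>j\<in>T. int j * int (f j)) \<le> fsize (\<lambda>j. int (f j))"
proof -
  let ?S = "{j. f j \<noteq> 0} \<union> T"
  have "finite ?S"
    using assms unfolding face_deg_seq_def by simp
  then have "(\<Sum>j\<in>T. int j * int (f j)) \<le> (\<Sum>j\<in>?S. int j * int (f j))"
    by (intro sum_mono2) auto
  also have "\<dots> = fsize (\<lambda>j. int (f j))"
    using \<open>finite ?S\<close> by (intro fsize_eq_sum[symmetric]) auto
  finally show ?thesis .
qed

lemma fsize_minus_ind_seq:
  assumes "face_deg_seq f"
  shows "fsize (\<lambda>j. int (f j) - ind_seq q j) = fsize (\<lambda>j. int (f j)) - int q"
proof -
  let ?S = "{j. f j \<noteq> 0} \<union> {q}"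
  have S: "finite ?S"
    using assms unfolding face_deg_seq_def by simp
  have "(\<Sum>j\<in>?S. int j * ind_seq q j) = int q"
    using S by (simp add: ind_seq_def if_distrib[of "\<lambda>x. _ * x"] sum.If_cases Int_absorb1 del: Un_insert_right)
  moreover have "fsize (\<lambda>j. int (f j) - ind_seq q j) = (\<Sum>j\<in>?S. int j * (int (f j) - ind_seq q j))"
    using S by (intro fsize_eq_sum) (auto simp: ind_seq_def)
  moreover have "fsize (\<lambda>j. int (f j)) = (\<Sum>j\<in>?S. int j * int (f j))"
    using S by (intro fsize_eq_sum) auto
  ultimately show ?thesis
    by (simp add: right_diff_distrib sum_subtractf)
qed

lemma beta_eq_0: "h j < 0 \<Longrightarrow> beta g h = 0"
  unfolding beta_def by auto

lemma beta_eq_div: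
  assumes "\<And>j. 0 \<le> h j"
  shows "beta g h = card (labelled_bip_maps g (\<lambda>j. nat (h j)) (nat (fsize h))) div fact (nat (fsize h) - 1)"
proof -
  have "\<not> (\<exists>j. h j < 0)"
    using assms by (simp add: not_less)
  then show ?thesis
    unfolding beta_def Let_def by simp
qed

lemma beta_grow_face:
  assumes f: "face_deg_seq f" and "1 \<le> j0" "j0 < p" "f j0 \<noteq> 0" "f p \<noteq> 0"
  shows "j0 * f j0 * beta g (\<lambda>j. int (f j) - ind_seq p j)
           \<le> nat (fsize (\<lambda>j. int (f j)) - int p) * beta g (\<lambda>j. int (f j) - ind_seq j0 j)"
proof -
  define N where "N = fsize (\<lambda>j. int (f j))"
  define hA where "hA j = int (f j) - ind_seq p j" for j
  define hB where "hB j = int (f j) - ind_seq j0 j" for j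
  have "int j0 * 1 + int p * 1 \<le> int j0 * int (f j0) + int p * int (f p)"
    using assms by (intro add_mono mult_left_mono) auto
  also have "\<dots> \<le> N"
    using sum_le_fsize[OF f, of "{j0, p}"] \<open>j0 < p\<close> by (simp add: N_def)
  finally have N: "int j0 + int p \<le> N"
    by simp
  have "0 \<le> hA j" "0 \<le> hB j" for j
    using assms by (auto simp: hA_def hB_def ind_seq_def)
  moreover have "fsize hA = N - int p" "fsize hB = N - int j0"
    unfolding hA_def hB_def N_def by (rule fsize_minus_ind_seq[OF f])+
  ultimately have beta_A: "beta g hA = card (labelled_bip_maps g (\<lambda>j. nat (hA j)) (nat (N - int p)))
        div fact (nat (N - int p) - 1)"
    and beta_B: "beta g hB = card (labelled_bip_maps g (\<lambda>j. nat (hB j)) (nat (N - int j0)))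
        div fact (nat (N - int j0) - 1)"
    by (simp_all add: beta_eq_div)
  have "nat (hB j) + of_bool (j0 = j) = nat (hA j) + of_bool (p = j)" for j
    using \<open>j0 < p\<close> \<open>f j0 \<noteq> 0\<close> \<open>f p \<noteq> 0\<close>
    by (cases "j = j0"; cases "j = p") (simp_all add: hA_def hB_def ind_seq_def)
  then interpret face_growth g "nat (N - int p)" "nat (N - int j0)" j0 p
      "\<lambda>j. nat (hA j)" "\<lambda>j. nat (hB j)"
    using N \<open>1 \<le> j0\<close> \<open>j0 < p\<close> by unfold_locales auto
  have "nat (hA j0) = f j0"
    using \<open>j0 < p\<close> by (simp add: hA_def ind_seq_def)
  then show ?thesis
    unfolding N_def[symmetric] hA_def[symmetric] hB_def[symmetric] beta_A beta_B
    using rooted_counts_ineq by simp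
qed

lemma beta_remove_face_ineq:
  assumes f: "face_deg_seq f" and "1 \<le> j0" "j0 \<le> p"
  shows "int j0 * int (f j0) * int (beta g (\<lambda>j. int (f j) - ind_seq p j))
           \<le> fsize (\<lambda>j. int (f j)) * int (beta g (\<lambda>j. int (f j) - ind_seq j0 j))"
proof -
  let ?N = "fsize (\<lambda>j. int (f j))"
  have "0 \<le> ?N"
    using sum_le_fsize[OF f, of "{}"] by simp
  consider "f j0 = 0 \<or> f p = 0" | "j0 = p" | "j0 < p" "f j0 \<noteq> 0" "f p \<noteq> 0"
    using \<open>j0 \<le> p\<close> by linarith
  then show ?thesis
  proof cases
    case 1
    then have "int j0 * int (f j0) * int (beta g (\<lambda>j. int (f j) - ind_seq p j)) = 0"
      using beta_eq_0[of "\<lambda>j. int (f j) - ind_seq p j" p] by (auto simp: ind_seq_def)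
    moreover have "0 \<le> ?N * int (beta g (\<lambda>j. int (f j) - ind_seq j0 j))"
      using \<open>0 \<le> ?N\<close> by simp
    ultimately show ?thesis
      by linarith
  next
    case 2
    have "int j0 * int (f j0) \<le> ?N"
      using sum_le_fsize[OF f, of "{j0}"] by simp
    then show ?thesis
      using 2 by (simp add: mult_right_mono)
  next
    case 3
    have "int (nat (?N - int p)) \<le> ?N"
      using \<open>0 \<le> ?N\<close> by simp
    then have "int (nat (?N - int p) * beta g (\<lambda>j. int (f j) - ind_seq j0 j))
        \<le> ?N * int (beta g (\<lambda>j. int (f j) - ind_seq j0 j))"
      by (simp add: mult_right_mono)
    moreover have "int (j0 * f j0 * beta g (\<lambda>j. int (f j) - ind_seq p j))
        \<le> int (nat (?N - int p) * beta g (\<lambda>j. int (f j) - ind_seq j0 j))"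
      using beta_grow_face[OF f \<open>1 \<le> j0\<close> 3] by (simp only: of_nat_le_iff)
    ultimately show ?thesis
      by simp
  qed
qed

lemma beta_remove_face_fraction:
  assumes f: "face_deg_seq f" and "1 \<le> j0" "j0 \<le> p"
    and \<delta>: "\<delta> * real_of_int (fsize (\<lambda>j. int (f j))) \<le> real (j0 * f j0)"
  shows "\<delta> * real (beta g (\<lambda>j. int (f j) - ind_seq p j)) \<le> real (beta g (\<lambda>j. int (f j) - ind_seq j0 j))"
proof (cases "f p = 0")
  case True
  then show ?thesis
    using beta_eq_0[of "\<lambda>j. int (f j) - ind_seq p j" p] by (simp add: ind_seq_def)
next
  case False
  define N where "N = fsize (\<lambda>j. int (f j))"
  define \<beta>p where "\<beta>p = beta g (\<lambda>j. int (f j) - ind_seq p j)"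
  define \<beta>j0 where "\<beta>j0 = beta g (\<lambda>j. int (f j) - ind_seq j0 j)"
  have "1 * 1 \<le> int p * int (f p)"
    using False assms(2,3) by (intro mult_mono) auto
  also have "\<dots> \<le> N"
    using sum_le_fsize[OF f, of "{p}"] by (simp add: N_def)
  finally have "0 < real_of_int N"
    by simp
  have "real_of_int (int j0 * int (f j0) * int \<beta>p) \<le> real_of_int (N * int \<beta>j0)"
    using beta_remove_face_ineq[OF f \<open>1 \<le> j0\<close> \<open>j0 \<le> p\<close>]
    unfolding N_def \<beta>p_def \<beta>j0_def by (simp only: of_int_le_iff)
  then have "real (j0 * f j0) * real \<beta>p \<le> real_of_int N * real \<beta>j0"
    by simp
  moreover have "real_of_int N * (\<delta> * real \<beta>p) \<le> real (j0 * f j0) * real \<beta>p"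
    using \<delta> by (simp add: N_def mult.assoc[symmetric] mult_right_mono mult.commute[of _ \<delta>])
  ultimately have "real_of_int N * (\<delta> * real \<beta>p) \<le> real_of_int N * real \<beta>j0"
    by (rule order_trans[rotated])
  then show ?thesis
    using \<open>0 < real_of_int N\<close> unfolding \<beta>p_def[symmetric] \<beta>j0_def[symmetric]
    by (simp add: mult_le_cancel_left_pos)
qed

theorem lemma20:
  fixes f :: "nat \<Rightarrow> nat" and g p j0 :: nat
  assumes "face_deg_seq f" and "1 \<le> j0" and "j0 \<le> p"
  shows "fsize (\<lambda>j. int (f j)) * int (beta g (\<lambda>j. int (f j) - ind_seq j0 j))
           \<ge> int j0 * int (f j0) * int (beta g (\<lambda>j. int (f j) - ind_seq p j))
    \<and> (\<forall>\<delta>::real. \<delta> > 0 \<longrightarrow> real (j0 * f j0) \<ge> \<delta> * real_of_int (fsize (\<lambda>j. int (f j))) \<longrightarrow>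
          real (beta g (\<lambda>j. int (f j) - ind_seq j0 j))
            \<ge> \<delta> * real (beta g (\<lambda>j. int (f j) - ind_seq p j)))"
  using beta_remove_face_ineq[OF assms] beta_remove_face_fraction[OF assms] by auto

end
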